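(* Let $r>0$ and let $z\colon[0,r)\to[0,r)$ be a homeomorphism with $(\alpha)z>\alpha$ for all $\alpha\in(0,r)$. Let $f$ be a permutation of $[0,r)$ such that $f$ commutes with $z$, $f$ is right-continuous at $0$, and $f$ has only finitely many points of discontinuity. Then $f$ is continuous (for the usual topology).
   Context: Maps act on the right: $(\alpha)z$ denotes the image of $\alpha$ under $z$, and $(\alpha)(fz)=((\alpha)f)z$. *)

theory Defs
  imports "HOL-Analysis.Analysis"
begin

end

theory Submission
  imports Defs
begin

(* Let D be the (finite) set of points of [0,r) at which f is
   discontinuous.  Since f commutes with the homeomorphism z, f = z^-1 o f o z
   on [0,r); so if f were continuous at z(x), it would be continuous at x.
   Hence z maps D into D.  As z pushes every positive point strictly upwards,
   a finite z-invariant set cannot contain a positive point (look at its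
   maximum), so D is contained in {0}; and 0 is excluded by right-continuity
   of f at 0.  Thus D is empty.
   The file proves three general facts -- continuity from the right at the
   left end of an interval, transfer of continuity along a conjugation, and
   the maximum argument for finite invariant sets -- and combines them. *)

lemma continuous_at_right_imp_within:
  fixes f :: "real \<Rightarrow> 'b::topological_space"
  assumes "continuous (at_right a) f" and "S \<subseteq> {a..}"
  shows "continuous (at a within S) f"
proof -
  have "(f \<longlongrightarrow> f a) (at_right a)"
    using assms(1) by (simp add: continuous_within)
  moreover have "at a within S \<le> at_right a"
    unfolding at_within_def using assms(2) by (intro inf_mono) auto
  ultimately show ?thesis
    by (simp add: continuous_within filterlim_mono)
qed

text \<open>If \<open>f\<close> maps \<open>S\<close> into itself and commutes with a self-homeomorphism
  \<open>z\<close> of \<open>S\<close>, then \<open>f = z\<inverse> \<circ> f \<circ> z\<close> on \<open>S\<close>, so continuity of \<open>f\<close> at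
  \<open>z x\<close> gives continuity of \<open>f\<close> at \<open>x\<close>.\<close>

lemma continuous_within_commuting_homeomorphism:
  fixes f z :: "'a::metric_space \<Rightarrow> 'a"
  assumes hom: "homeomorphism S S z g"
    and f_into: "f ` S \<subseteq> S"
    and comm: "\<And>y. y \<in> S \<Longrightarrow> f (z y) = z (f y)"
    and x: "x \<in> S"
    and cont_zx: "continuous (at (z x) within S) f"
  shows "continuous (at x within S) f"
proof -
  have z_into: "z ` S \<subseteq> S" and g_z: "\<And>y. y \<in> S \<Longrightarrow> g (z y) = y"
    and z_cont: "continuous_on S z" and g_cont: "continuous_on S g"
    using hom unfolding homeomorphism_def by auto
  have conj: "g (f (z y)) = f y" if "y \<in> S" for y
    using comm[OF that] g_z f_into that by auto
  have fz_cont: "continuous (at x within S) (f \<circ> z)"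
    using z_cont x z_into cont_zx
    by (intro continuous_within_compose)
       (auto simp: continuous_on_eq_continuous_within intro: continuous_within_subset)
  have "continuous (at x within S) (g \<circ> (f \<circ> z))"
  proof (rule continuous_within_compose[OF fz_cont])
    have "continuous (at (f (z x)) within S) g"
      using g_cont x z_into f_into by (auto simp: continuous_on_eq_continuous_within)
    moreover have "(f \<circ> z) ` S \<subseteq> S" using z_into f_into by auto
    ultimately show "continuous (at ((f \<circ> z) x) within (f \<circ> z) ` S) g"
      by (auto intro: continuous_within_subset)
  qed
  then show ?thesis
    using x conj
    by (auto intro: continuous_transform_within[where \<delta>=1] simp: dist_commute)
qed

text \<open>A finite set mapped into itself by a map that strictly increases every
  element above \<open>a\<close> lies below \<open>a\<close>: its maximum cannot be moved upwards.\<close>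

lemma finite_invariant_set_below:
  fixes D :: "'a::linorder set"
  assumes "finite D" and "z ` D \<subseteq> D"
    and increasing: "\<And>x. x \<in> D \<Longrightarrow> a < x \<Longrightarrow> x < z x"
  shows "D \<subseteq> {..a}"
proof (cases "D = {}")
  case False
  define m where "m = Max D"
  have m: "m \<in> D" and max: "\<And>x. x \<in> D \<Longrightarrow> x \<le> m"
    using assms(1) False by (auto simp: m_def)
  have "z m \<le> m" using assms(2) m max by auto
  then have "m \<le> a" using increasing[OF m] by force
  then show ?thesis using max by force
qed simp

theorem lemma3p1:
  fixes r :: real and z f :: "real \<Rightarrow> real"
  assumes r_pos: "r > 0"
    and z_homeo: "\<exists>g. homeomorphism {0..<r} {0..<r} z g"
    and z_gt: "\<And>\<alpha>. \<alpha> \<in> {0<..<r} \<Longrightarrow> z \<alpha> > \<alpha>"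
    and f_perm: "bij_betw f {0..<r} {0..<r}"
    and f_comm: "\<And>\<alpha>. \<alpha> \<in> {0..<r} \<Longrightarrow> f (z \<alpha>) = z (f \<alpha>)"
    and f_rcont0: "continuous (at_right 0) f"
    and f_fin_disc: "finite {\<alpha> \<in> {0..<r}. \<not> continuous (at \<alpha> within {0..<r}) f}"
  shows "continuous_on {0..<r} f"
proof -
  define D where "D = {\<alpha> \<in> {0..<r}. \<not> continuous (at \<alpha> within {0..<r}) f}"
  obtain g where hom: "homeomorphism {0..<r} {0..<r} z g" using z_homeo by blast
  have f_into: "f ` {0..<r} \<subseteq> {0..<r}" using f_perm by (simp add: bij_betw_def)
  have z_into: "z ` {0..<r} \<subseteq> {0..<r}" using hom by (simp add: homeomorphism_def)
  have "z x \<in> D" if "x \<in> D" for x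
  proof (rule ccontr)
    assume "z x \<notin> D"
    moreover have x: "x \<in> {0..<r}" using that by (simp add: D_def)
    moreover have "z x \<in> {0..<r}" using z_into x by blast
    ultimately have "continuous (at (z x) within {0..<r}) f"
      by (simp add: D_def)
    then have "continuous (at x within {0..<r}) f"
      using continuous_within_commuting_homeomorphism[OF hom f_into _ x] f_comm by blast
    then show False using that by (simp add: D_def)
  qed
  then have "D \<subseteq> {..0}"
  proof (intro finite_invariant_set_below)
    show "finite D" using f_fin_disc by (simp add: D_def)
    show "\<And>x. x \<in> D \<Longrightarrow> 0 < x \<Longrightarrow> x < z x" using z_gt by (simp add: D_def)
  qed auto
  moreover have "continuous (at 0 within {0..<r}) f"
    by (rule continuous_at_right_imp_within[OF f_rcont0]) auto
  then have "0 \<notin> D" by (simp add: D_def)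
  ultimately have "D = {}" unfolding D_def by force
  then show ?thesis
    unfolding D_def by (auto simp: continuous_on_eq_continuous_within)
qed

end
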